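(* For $a,b>1$ define $$x=\frac{\sqrt{a^2-1}\,(a^3-8)}{a^6},\quad x_1=(\sqrt{a^2-1}-\sqrt{b^2-1})^3+a^3,\quad y=\frac{\sqrt{b^2-1}\,(b^3-8)}{b^6},\quad y_1=(\sqrt{a^2-1}-\sqrt{b^2-1})^3+b^3.$$ Let $b_1$ be the only real root in $(\sqrt2,\sqrt2(\sqrt3+1))$ of $p(z)=-2z^5+3z^3+40z^2-48$. Then for all $a\in(1,2)$ and $b\in(\sqrt2,b_1)$, $$x<0,\qquad y_1>0,\qquad \frac{\partial x_1}{\partial b}\le 0,\qquad \frac{\partial (y\,y_1)}{\partial b}>0.$$ *)

theory Defs
  imports "HOL-Analysis.Analysis"
begin

definition lem3_x :: "real \<Rightarrow> real" where
  "lem3_x a = sqrt (a^2 - 1) * (a^3 - 8) / a^6"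

definition lem3_x1 :: "real \<Rightarrow> real \<Rightarrow> real" where
  "lem3_x1 a b = (sqrt (a^2 - 1) - sqrt (b^2 - 1))^3 + a^3"

definition lem3_y :: "real \<Rightarrow> real" where
  "lem3_y b = sqrt (b^2 - 1) * (b^3 - 8) / b^6"

definition lem3_y1 :: "real \<Rightarrow> real \<Rightarrow> real" where
  "lem3_y1 a b = (sqrt (a^2 - 1) - sqrt (b^2 - 1))^3 + b^3"

definition lem3_p :: "real \<Rightarrow> real" where
  "lem3_p z = -2 * z^5 + 3 * z^3 + 40 * z^2 - 48"

end

(*
  Write A = sqrt (a^2 - 1) and B = sqrt (b^2 - 1), so that 0 < A < sqrt 3 and 1 < B < b.
  Then y1 = (A - B)^3 + b^3 is positive because A - B + b > 0, the derivative of x1 in b is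
  -3 b (A - B)^2 / B, and the derivative of y is p(b) / (B b^7), which is positive on
  (sqrt 2, b1) by the intermediate value theorem since p(sqrt 2) > 0.
  For the product y y1: if b >= 2 then y >= 0, and A < sqrt 3 <= B gives (A - B)^2 < b B,
  so y1' > 0 as well.  If b < 2 then y < 0; bounding y1 >= b^3 - B^3 >= b^3 - (b^2 - 1) b^2 / 2
  and dropping the nonnegative (A - B)^2-term of y y1' leaves, up to the positive factor
  b^2 / (B b^7), an explicit polynomial of degree 7 in b that is positive on [sqrt 2, 2].
*)
theory Submission
  imports Defs
begin

lemma pos_before_first_zero:
  fixes f :: "'a::linear_continuum_topology \<Rightarrow> 'b::{linorder_topology, zero}"
  assumes "continuous_on {c..d} f" "c \<le> d" "0 < f c"
    and no_zero: "\<And>z. c < z \<Longrightarrow> z \<le> d \<Longrightarrow> f z \<noteq> 0"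
  shows "0 < f d"
proof (rule ccontr)
  assume "\<not> 0 < f d"
  then obtain z where "c \<le> z" "z \<le> d" "f z = 0"
    using IVT2'[of f d 0 c] assms(1-3) by force
  moreover have "z \<noteq> c" using \<open>f z = 0\<close> \<open>0 < f c\<close> by auto
  ultimately show False using no_zero by force
qed

lemma sqrt_sq_minus_one_less:
  fixes b :: real
  assumes "0 < b"
  shows "sqrt (b^2 - 1) < b"
  using assms real_sqrt_less_iff[of "b^2 - 1" "b^2"] by simp

lemma lem3_x_neg:
  fixes a :: real
  assumes "1 < a" "a < 2"
  shows "lem3_x a < 0"
proof -
  have "a^3 < 2^3" using assms by (intro power_strict_mono) auto
  moreover have "0 < sqrt (a^2 - 1)" using assms by (simp add: one_less_power)
  ultimately show ?thesis using assms unfolding lem3_x_def by (simp add: mult_pos_neg divide_neg_pos)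
qed

lemma lem3_y1_pos:
  fixes a b :: real
  assumes "1 \<le> a^2" "0 < b"
  shows "0 < lem3_y1 a b"
proof -
  define s where "s = sqrt (a^2 - 1) - sqrt (b^2 - 1)"
  have "0 \<le> sqrt (a^2 - 1)" using assms by simp
  then have "0 < s + b" using assms sqrt_sq_minus_one_less[of b] unfolding s_def by linarith
  moreover have "0 < (s - b/2)^2 + 3/4 * b^2" using assms by (simp add: add_nonneg_pos)
  moreover have "lem3_y1 a b = (s + b) * ((s - b/2)^2 + 3/4 * b^2)"
    unfolding lem3_y1_def s_def[symmetric] by algebra
  ultimately show ?thesis by simp
qed

lemma lem3_y1_lower_bound:
  fixes a b :: real
  assumes "1 \<le> a^2" "1 \<le> b^2"
  shows "b^3 - (b^2 - 1) * b^2 / 2 \<le> lem3_y1 a b"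
proof -
  define A B where "A = sqrt (a^2 - 1)" and "B = sqrt (b^2 - 1)"
  have "0 \<le> A" "0 \<le> B" "B^2 = b^2 - 1" using assms by (simp_all add: A_def B_def)
  have "0 \<le> (A - B)^3 + B^3"
  proof -
    have "(A - B)^3 + B^3 = A * ((A - 3/2 * B)^2 + 3/4 * B^2)" by algebra
    with \<open>0 \<le> A\<close> show ?thesis by simp
  qed
  moreover have "B^3 \<le> (b^2 - 1) * b^2 / 2"
  proof -
    have "B \<le> (B^2 + 1) / 2" using zero_le_power2[of "B - 1"] by (simp add: power2_diff)
    then have "B^2 * B \<le> B^2 * (b^2 / 2)"
      using \<open>B^2 = b^2 - 1\<close> assms(2) by (intro mult_left_mono) auto
    then show ?thesis using \<open>B^2 = b^2 - 1\<close> by (simp add: power3_eq_cube power2_eq_square)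
  qed
  ultimately show ?thesis unfolding lem3_y1_def A_def[symmetric] B_def[symmetric] by linarith
qed

lemma lem3_x1_has_derivative:
  fixes a b :: real
  assumes "1 < b^2"
  shows "(lem3_x1 a has_real_derivative
           - 3 * b * (sqrt (a^2 - 1) - sqrt (b^2 - 1))^2 / sqrt (b^2 - 1)) (at b)"
  unfolding lem3_x1_def [abs_def] using assms
  by (auto intro!: derivative_eq_intros simp: field_simps)

lemma lem3_y1_has_derivative:
  fixes a b :: real
  assumes "1 < b^2"
  shows "(lem3_y1 a has_real_derivative
           3 * b^2 - 3 * b * (sqrt (a^2 - 1) - sqrt (b^2 - 1))^2 / sqrt (b^2 - 1)) (at b)"
  unfolding lem3_y1_def [abs_def] using assms
  by (auto intro!: derivative_eq_intros simp: field_simps)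

lemma lem3_y_has_derivative:
  fixes b :: real
  assumes "1 < b"
  shows "(lem3_y has_real_derivative lem3_p b / (sqrt (b^2 - 1) * b^7)) (at b)"
proof -
  have "1 < b^2" using assms by (simp add: one_less_power)
  with assms show ?thesis
    unfolding lem3_y_def [abs_def] lem3_p_def
    by (auto intro!: derivative_eq_intros simp del: one_less_power simp: field_simps) algebra
qed

lemma lem3_p_sqrt2_pos: "0 < lem3_p (sqrt 2)"
proof -
  have "sqrt 2 ^ 3 = 2 * sqrt (2::real)" "sqrt 2 ^ 5 = 4 * sqrt (2::real)"
    by (simp_all add: power_numeral_reduce)
  moreover have "sqrt (2::real) < 2" by (rule real_less_lsqrt) auto
  ultimately show ?thesis unfolding lem3_p_def by simp
qed

lemma lem3_p_pos_below_root:
  fixes b b1 :: real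
  assumes "b1 < sqrt 2 * (sqrt 3 + 1)"
    and root_unique: "\<And>z. sqrt 2 < z \<Longrightarrow> z < sqrt 2 * (sqrt 3 + 1) \<Longrightarrow> lem3_p z = 0 \<Longrightarrow> z = b1"
    and "sqrt 2 < b" "b < b1"
  shows "0 < lem3_p b"
proof (rule pos_before_first_zero [of "sqrt 2" b])
  show "continuous_on {sqrt 2..b} lem3_p"
    unfolding lem3_p_def [abs_def] by (intro continuous_intros)
  show "0 < lem3_p (sqrt 2)" by (rule lem3_p_sqrt2_pos)
  fix z assume z: "sqrt 2 < z" "z \<le> b"
  then have "z < sqrt 2 * (sqrt 3 + 1)" "z \<noteq> b1" using assms(1,3,4) by linarith+
  then show "lem3_p z \<noteq> 0" using root_unique z(1) by blast
qed (use assms in simp)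

(* Expanded around 707/500 < sqrt 2, only the coefficient of x^2 is negative, and on
   0 <= x <= 3/5 it is dominated by the linear term. *)
lemma septic_bound_pos:
  fixes b :: real
  assumes "707/500 \<le> b" "b \<le> 2"
  shows "0 < -24 - 24*b + 44*b^2 + 35/2*b^3 - 20*b^4 - 5/2*b^5 + b^6 + b^7"
proof -
  define x where "x = b - 707/500"
  have x: "0 \<le> x" "x \<le> 3/5" using assms unfolding x_def by auto
  have expand: "-24 - 24*b + 44*b^2 + 35/2*b^3 - 20*b^4 - 5/2*b^5 + b^6 + b^7 =
     36904989105612983143 / 7812500000000000000
     + x * (298806171744195343 / 15625000000000000 - 428222906216053 / 31250000000000 * x)
     + 635668395607 / 12500000000 * x^3 + 2281651201 / 25000000 * x^4
     + 11992829 / 250000 * x^5 + 5449 / 500 * x^6 + x^7"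
    unfolding x_def by algebra
  have "0 \<le> x * (298806171744195343 / 15625000000000000 - 428222906216053 / 31250000000000 * x)"
    using x by (intro mult_nonneg_nonneg) auto
  moreover have "0 \<le> 635668395607 / 12500000000 * x^3 + 2281651201 / 25000000 * x^4
     + 11992829 / 250000 * x^5 + 5449 / 500 * x^6 + x^7"
    using x by simp
  ultimately show ?thesis unfolding expand by linarith
qed

lemma lem3_y_y1_derivative_pos_large:
  fixes a b :: real
  defines "A \<equiv> sqrt (a^2 - 1)" and "B \<equiv> sqrt (b^2 - 1)"
  assumes "1 < a" "a < 2" "2 \<le> b" "0 < lem3_p b"
  shows "0 < lem3_p b / (B * b^7) * lem3_y1 a b + (3 * b^2 - 3 * b * (A - B)^2 / B) * lem3_y b"
proof -
  have "0 < A" "A^2 < 3"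
    using assms power_strict_mono[of a 2 2] by (simp_all add: A_def one_less_power)
  moreover have "0 < B" "3 \<le> B^2" "B < b"
    using assms power_mono[of 2 b 2] sqrt_sq_minus_one_less[of b] by (simp_all add: B_def)
  ultimately have "A < B" using power_less_imp_less_base[of A 2 B] by simp
  then have "(A - B)^2 < B^2"
    using \<open>0 < A\<close> power_strict_mono[of "B - A" B 2] by (simp add: power2_commute)
  also have "\<dots> < b * B" using \<open>0 < B\<close> \<open>B < b\<close> by (simp add: power2_eq_square)
  finally have "0 < 3 * b / B * (b * B - (A - B)^2)"
    using \<open>0 < B\<close> assms(5) by simp
  also have "\<dots> = 3 * b^2 - 3 * b * (A - B)^2 / B"
    using \<open>0 < B\<close> by (simp add: field_simps power2_eq_square)
  finally have "0 < 3 * b^2 - 3 * b * (A - B)^2 / B" .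
  moreover have "0 \<le> lem3_y b"
    using assms power_mono[of 2 b 3] \<open>0 < B\<close> by (simp add: lem3_y_def B_def[symmetric])
  moreover have "0 < lem3_p b / (B * b^7) * lem3_y1 a b"
    using assms \<open>0 < B\<close> lem3_y1_pos[of a b] by (simp add: one_less_power)
  ultimately show ?thesis by (simp add: add_pos_nonneg)
qed

lemma lem3_y_y1_derivative_pos_small:
  fixes a b :: real
  defines "A \<equiv> sqrt (a^2 - 1)" and "B \<equiv> sqrt (b^2 - 1)"
  assumes "1 \<le> a^2" "sqrt 2 \<le> b" "b \<le> 2" "0 < lem3_p b"
  shows "0 < lem3_p b / (B * b^7) * lem3_y1 a b + (3 * b^2 - 3 * b * (A - B)^2 / B) * lem3_y b"
proof -
  have "707/500 < sqrt (2::real)" by (rule real_less_rsqrt) (simp add: power2_eq_square)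
  with assms have "707/500 \<le> b" by linarith
  then have "1 < b^2" by (simp add: one_less_power)
  then have B: "0 < B" "B^2 = b^2 - 1" by (simp_all add: B_def)
  have "b^3 \<le> 8" using assms power_mono[of b 2 3] \<open>707/500 \<le> b\<close> by simp
  define Dy where "Dy = lem3_p b / (B * b^7)"
  have "0 < Dy" using assms B \<open>707/500 \<le> b\<close> by (simp add: Dy_def)
  then have "Dy * (b^3 - (b^2 - 1) * b^2 / 2) \<le> Dy * lem3_y1 a b"
    using lem3_y1_lower_bound[of a b] assms \<open>1 < b^2\<close> by (intro mult_left_mono) auto
  moreover have "3 * (b^3 - 8) * B / b^4 \<le> (3 * b^2 - 3 * b * (A - B)^2 / B) * lem3_y b"
  proof -
    have "(3 * b^2 - 3 * b * (A - B)^2 / B) * lem3_y b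
        = 3 * (b^3 - 8) * B / b^4 + 3 * (A - B)^2 * (8 - b^3) / b^5"
      unfolding lem3_y_def B_def[symmetric] using B(1) \<open>707/500 \<le> b\<close>
      by (simp add: field_simps) algebra
    moreover have "0 \<le> 3 * (A - B)^2 * (8 - b^3) / b^5"
      using \<open>b^3 \<le> 8\<close> \<open>707/500 \<le> b\<close> by simp
    ultimately show ?thesis by linarith
  qed
  moreover have "0 < Dy * (b^3 - (b^2 - 1) * b^2 / 2) + 3 * (b^3 - 8) * B / b^4"
  proof -
    have "Dy * (b^3 - (b^2 - 1) * b^2 / 2) + 3 * (b^3 - 8) * B / b^4
        = (lem3_p b * (b^3 - (b^2 - 1) * b^2 / 2) + 3 * (b^3 - 8) * B^2 * b^3) / (B * b^7)"
      unfolding Dy_def using B(1) \<open>707/500 \<le> b\<close> by (simp add: field_simps) algebra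
    also have "\<dots> = b^2 * (-24 - 24*b + 44*b^2 + 35/2*b^3 - 20*b^4 - 5/2*b^5 + b^6 + b^7) / (B * b^7)"
      unfolding B(2) lem3_p_def by algebra
    finally show ?thesis
      using septic_bound_pos[of b] assms B \<open>707/500 \<le> b\<close> by simp
  qed
  ultimately show ?thesis unfolding Dy_def by linarith
qed

lemma lem3_y_y1_derivative_pos:
  fixes a b :: real
  defines "A \<equiv> sqrt (a^2 - 1)" and "B \<equiv> sqrt (b^2 - 1)"
  assumes "1 < a" "a < 2" "sqrt 2 \<le> b" "0 < lem3_p b"
  shows "0 < lem3_p b / (B * b^7) * lem3_y1 a b + (3 * b^2 - 3 * b * (A - B)^2 / B) * lem3_y b"
proof (cases "2 \<le> b")
  case True
  then show ?thesis
    unfolding A_def B_def using lem3_y_y1_derivative_pos_large assms(3,4,6) by blast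
next
  case False
  moreover have "1 \<le> a^2" using assms(3) by (simp add: one_le_power)
  ultimately show ?thesis
    unfolding A_def B_def using lem3_y_y1_derivative_pos_small assms(5,6) by simp
qed

theorem lemma3:
  fixes b1 :: real
  assumes b1_in: "sqrt 2 < b1" "b1 < sqrt 2 * (sqrt 3 + 1)"
    and b1_root: "lem3_p b1 = 0"
    and b1_unique: "\<And>z. sqrt 2 < z \<Longrightarrow> z < sqrt 2 * (sqrt 3 + 1) \<Longrightarrow> lem3_p z = 0 \<Longrightarrow> z = b1"
  shows "\<forall>a b. 1 < a \<and> a < 2 \<and> sqrt 2 < b \<and> b < b1 \<longrightarrow>
           lem3_x a < 0 \<and> lem3_y1 a b > 0 \<and>
           (\<lambda>t. lem3_x1 a t) differentiable (at b) \<and> deriv (\<lambda>t. lem3_x1 a t) b \<le> 0 \<and>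
           (\<lambda>t. lem3_y t * lem3_y1 a t) differentiable (at b) \<and>
           deriv (\<lambda>t. lem3_y t * lem3_y1 a t) b > 0"
proof (intro allI impI, elim conjE)
  fix a b :: real
  assume a: "1 < a" "a < 2" and b: "sqrt 2 < b" "b < b1"
  have "1 < sqrt (2::real)" by simp
  with b have "1 < b" by linarith
  with a have "1 < a^2" "1 < b^2" by (simp_all add: one_less_power)
  have p_pos: "0 < lem3_p b" by (rule lem3_p_pos_below_root[OF b1_in(2) b1_unique b])
  define A B where "A = sqrt (a^2 - 1)" and "B = sqrt (b^2 - 1)"
  note dx1 = lem3_x1_has_derivative[OF \<open>1 < b^2\<close>, of a, folded A_def B_def]
  note dyy1 = DERIV_mult[OF lem3_y_has_derivative[OF \<open>1 < b\<close>]
      lem3_y1_has_derivative[OF \<open>1 < b^2\<close>, of a], folded A_def B_def]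
  have "0 < B" using \<open>1 < b^2\<close> by (simp add: B_def)
  with \<open>1 < b\<close> have "- 3 * b * (A - B)^2 / B \<le> 0" by simp
  moreover have "0 < lem3_p b / (B * b^7) * lem3_y1 a b + (3 * b^2 - 3 * b * (A - B)^2 / B) * lem3_y b"
    unfolding A_def B_def
    by (rule lem3_y_y1_derivative_pos[OF a less_imp_le[OF b(1)] p_pos])
  ultimately show "lem3_x a < 0 \<and> lem3_y1 a b > 0 \<and>
           (\<lambda>t. lem3_x1 a t) differentiable (at b) \<and> deriv (\<lambda>t. lem3_x1 a t) b \<le> 0 \<and>
           (\<lambda>t. lem3_y t * lem3_y1 a t) differentiable (at b) \<and>
           deriv (\<lambda>t. lem3_y t * lem3_y1 a t) b > 0"
    using lem3_x_neg[OF a] lem3_y1_pos[of a b] \<open>1 < a^2\<close> \<open>1 < b\<close>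
      DERIV_imp_deriv[OF dx1] DERIV_imp_deriv[OF dyy1]
      real_differentiable_def[THEN iffD2, OF exI, OF dx1]
      real_differentiable_def[THEN iffD2, OF exI, OF dyy1]
    by simp
qed

end
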